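(* Assume $\beta>0$. Let $\lambda\in\mathfrak Q$ with $\tilde I(\lambda)<+\infty$. Then there exists a family $(\lambda_{\mathtt M})_{\mathtt M>0}$ of compactly supported measures in $\mathfrak Q$ (in particular with densities bounded by $(\beta\kappa)^{-1}$) such that $\lambda_{\mathtt M}\to\lambda$ weakly and $\tilde I(\lambda_{\mathtt M})\to\tilde I(\lambda)$ as $\mathtt M\to\infty$.
   Context: Fix $\eta,\theta>0$, $\gamma\in(0,1)$, $\beta>0$, $\xi\in(-\gamma^2,1]$; $\kappa=\gamma^2-|\xi|$, $\gamma^2$, $1-\xi$ according as $\xi\in(-\gamma^2,0]$, $(0,1-\gamma^2]$, $(1-\gamma^2,1]$. $\mathfrak Q$ is the set of probability measures $\lambda$ on $[\beta(\gamma^2-\kappa),+\infty)$ that are absolutely continuous with density $\le(\beta\kappa)^{-1}$. For $\lambda\in\mathfrak Q$ let $\mu$ be the push-forward of $\lambda$ under $x\mapsto e^{-x}$ and $\tilde I(\lambda)=I^{(\xi)}(\mu)$, where $I^{(\xi)}(\mu)=-H^{(\xi)}(\mu)-K^{(\xi)}(\mu)-M^{(\xi)}(\mu)$, $H^{(\xi)}(\mu)=\frac{\kappa^2}{2}\iint(\ln|x^\theta-y^\theta|+\ln|x^\eta-y^\eta|)d\mu d\mu$, and (i) $\xi\in(-\gamma^2,0]$: $K^{(\xi)}(\mu)=\kappa\int\int_{\gamma^2-1}^{|\xi|}\ln(1-x^\theta e^{\beta\theta u})du\,d\mu(x)$, $M^{(\xi)}(\mu)=\kappa\eta|\xi|\int\ln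 x\,d\mu$; (ii) $\xi\in(0,1-\gamma^2]$: $K^{(\xi)}(\mu)=\kappa\int\int_0^{1-\gamma^2-\xi}\ln(1-x^\theta e^{-\beta\theta u})du\,d\mu(x)$, $M^{(\xi)}(\mu)=\kappa\theta\xi\int\ln x\,d\mu$; (iii) $\xi\in(1-\gamma^2,1]$: $K^{(\xi)}(\mu)=\kappa\int\int_{1-\gamma^2-\xi}^{0}\ln(1-x^\eta e^{-\beta\eta u})du\,d\mu(x)$, $M^{(\xi)}(\mu)=\kappa\theta\xi\int\ln x\,d\mu$. *)

theory Defs
  imports "HOL-Probability.Probability"
begin

definition kappa :: "real \<Rightarrow> real \<Rightarrow> real" where
  "kappa \<gamma> \<xi> =
     (if \<xi> \<le> 0 then \<gamma>\<^sup>2 - \<bar>\<xi>\<bar>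
      else if \<xi> \<le> 1 - \<gamma>\<^sup>2 then \<gamma>\<^sup>2
      else 1 - \<xi>)"

text \<open>The class Q: probability measures on the reals, carried by
  [beta (gamma^2 - kappa), +infinity), absolutely continuous w.r.t. Lebesgue
  measure with a density f satisfying f <= (beta kappa)^(-1), written as
  beta kappa f <= 1 (so that kappa = 0 imposes no bound).\<close>
definition Qset :: "real \<Rightarrow> real \<Rightarrow> real \<Rightarrow> real measure set" where
  "Qset \<beta> \<gamma> \<xi> = {lam. prob_space lam \<and> sets lam = sets borel \<and>
      emeasure lam {..<\<beta> * (\<gamma>\<^sup>2 - kappa \<gamma> \<xi>)} = 0 \<and>
      (\<exists>f \<in> borel_measurable borel.
          (\<forall>x. 0 \<le> f x \<and> \<beta> * kappa \<gamma> \<xi> * f x \<le> 1) \<and>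
          lam = density lborel (\<lambda>x. ennreal (f x)))}"

text \<open>All logarithms appearing in I are of numbers in (0,1] (resp. 0) on the support,
  so -H, -K, -M are nonnegative and I takes values in [0,+infinity].\<close>
definition nlog :: "real \<Rightarrow> ennreal" where
  "nlog t = (if t \<le> 0 then \<infinity> else ennreal (- ln t))"

definition Hneg :: "real \<Rightarrow> real \<Rightarrow> real \<Rightarrow> real \<Rightarrow> real measure \<Rightarrow> ennreal" where
  "Hneg \<eta> \<theta> \<gamma> \<xi> \<mu> = ennreal ((kappa \<gamma> \<xi>)\<^sup>2 / 2) *
     (\<integral>\<^sup>+x. \<integral>\<^sup>+y. (nlog \<bar>x powr \<theta> - y powr \<theta>\<bar> + nlog \<bar>x powr \<eta> - y powr \<eta>\<bar>) \<partial>\<mu> \<partial>\<mu>)"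

definition Kneg :: "real \<Rightarrow> real \<Rightarrow> real \<Rightarrow> real \<Rightarrow> real \<Rightarrow> real measure \<Rightarrow> ennreal" where
  "Kneg \<eta> \<theta> \<beta> \<gamma> \<xi> \<mu> = ennreal (kappa \<gamma> \<xi>) *
     (if \<xi> \<le> 0 then
        (\<integral>\<^sup>+x. (\<integral>\<^sup>+u\<in>{\<gamma>\<^sup>2 - 1..\<bar>\<xi>\<bar>}. nlog (1 - x powr \<theta> * exp (\<beta> * \<theta> * u)) \<partial>lborel) \<partial>\<mu>)
      else if \<xi> \<le> 1 - \<gamma>\<^sup>2 then
        (\<integral>\<^sup>+x. (\<integral>\<^sup>+u\<in>{0..1 - \<gamma>\<^sup>2 - \<xi>}. nlog (1 - x powr \<theta> * exp (- \<beta> * \<theta> * u)) \<partial>lborel) \<partial>\<mu>)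
      else
        (\<integral>\<^sup>+x. (\<integral>\<^sup>+u\<in>{1 - \<gamma>\<^sup>2 - \<xi>..0}. nlog (1 - x powr \<eta> * exp (- \<beta> * \<eta> * u)) \<partial>lborel) \<partial>\<mu>))"

definition Mneg :: "real \<Rightarrow> real \<Rightarrow> real \<Rightarrow> real \<Rightarrow> real measure \<Rightarrow> ennreal" where
  "Mneg \<eta> \<theta> \<gamma> \<xi> \<mu> =
     (if \<xi> \<le> 0 then ennreal (kappa \<gamma> \<xi> * \<eta> * \<bar>\<xi>\<bar>)
      else ennreal (kappa \<gamma> \<xi> * \<theta> * \<xi>)) * (\<integral>\<^sup>+x. nlog x \<partial>\<mu>)"

definition Ixi :: "real \<Rightarrow> real \<Rightarrow> real \<Rightarrow> real \<Rightarrow> real \<Rightarrow> real measure \<Rightarrow> ennreal" where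
  "Ixi \<eta> \<theta> \<beta> \<gamma> \<xi> \<mu> = Hneg \<eta> \<theta> \<gamma> \<xi> \<mu> + Kneg \<eta> \<theta> \<beta> \<gamma> \<xi> \<mu> + Mneg \<eta> \<theta> \<gamma> \<xi> \<mu>"

definition Itilde :: "real \<Rightarrow> real \<Rightarrow> real \<Rightarrow> real \<Rightarrow> real \<Rightarrow> real measure \<Rightarrow> ennreal" where
  "Itilde \<eta> \<theta> \<beta> \<gamma> \<xi> lam = Ixi \<eta> \<theta> \<beta> \<gamma> \<xi> (distr lam borel (\<lambda>x. exp (- x)))"

definition compactly_supported :: "real measure \<Rightarrow> bool" where
  "compactly_supported lam \<longleftrightarrow> (\<exists>C. compact C \<and> emeasure lam (UNIV - C) = 0)"

definition weak_conv_filter :: "('i \<Rightarrow> real measure) \<Rightarrow> real measure \<Rightarrow> 'i filter \<Rightarrow> bool" where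
  "weak_conv_filter lams lam F \<longleftrightarrow>
     (\<forall>f :: real \<Rightarrow> real. continuous_on UNIV f \<and> bounded (range f) \<longrightarrow>
        ((\<lambda>i. \<integral>x. f x \<partial>lams i) \<longlongrightarrow> (\<integral>x. f x \<partial>lam)) F)"

end

theory Submission
  imports Defs
begin

text \<open>Write \<open>\<lambda> = f(x) dx\<close>. The approximant keeps \<open>f\<close> on \<open>[0, M']\<close>, \<open>M' = max M K\<close>, and
  puts the discarded tail mass \<open>T\<^sub>M\<close> on a copy of \<open>f\<close> restricted to \<open>[0, K]\<close>, scaled by
  \<open>T\<^sub>M / \<lambda>[0, K] \<le> 1\<close> and translated to \<open>[M' + 1, M' + 1 + K]\<close>. Pointwise the new density is
  bounded by a translate of \<open>f\<close>, so it stays in \<open>Qset\<close>, and it converges to \<open>f\<close> in \<open>L\<^sup>1\<close>.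
  In the variable \<open>s = -ln x\<close> the three parts of \<open>I\<close> become \<open>\<integral>\<integral> f f \<Phi>\<close> with \<open>\<Phi> = log_kernel\<close>,
  \<open>\<integral> f \<psi>\<close> and \<open>\<integral> f(s) s\<close>, where \<open>\<psi>\<close> decreases, \<open>\<Phi>(s + d, t + d) \<le> \<Phi>(s, t) + (\<theta> + \<eta>) d\<close> and
  \<open>\<Phi>(s, t) \<le> (\<theta> + \<eta>) s + C\<close> when \<open>s + 1 \<le> t\<close>. The truncated part converges by dominated
  convergence; the moved part costs at most \<open>M' T\<^sub>M\<close>, and since \<open>\<Phi>(s, t) \<ge> \<theta> min s t\<close>
  this is dominated by the tails of the finite integrals \<open>\<integral>\<integral> f f \<Phi>\<close> and \<open>\<integral> f(s) s\<close>.\<close>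

section \<open>The logarithmic kernel\<close>

lemma nlog_measurable [measurable]: "nlog \<in> borel_measurable borel"
  unfolding nlog_def by measurable

lemma nlog_antimono: "x \<le> y \<Longrightarrow> nlog y \<le> nlog x"
  unfolding nlog_def by (auto intro!: ennreal_leI)

lemma nlog_exp_neg: "nlog (exp (- c)) = ennreal c"
  unfolding nlog_def by simp

lemma ennreal_add_le_add: "0 \<le> b \<Longrightarrow> ennreal (a + b) \<le> ennreal a + ennreal b"
  by (cases "0 \<le> a") (auto simp: add_increasing intro: order_trans[OF ennreal_leI[of _ b]])

lemma nlog_exp_neg_mult_le:
  assumes "0 \<le> x" "0 \<le> c"
  shows "nlog (exp (- c) * x) \<le> nlog x + ennreal c"
proof (cases "x = 0")
  case False
  with assms have "nlog (exp (- c) * x) = ennreal (- ln x + c)"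
    by (simp add: nlog_def ln_mult not_le)
  also have "\<dots> \<le> ennreal (- ln x) + ennreal c"
    using assms(2) by (rule ennreal_add_le_add)
  finally show ?thesis
    using False assms by (simp add: nlog_def)
qed (simp add: nlog_def)

text \<open>The integrand of \<open>-H\<close> after the substitution \<open>x = exp (- s)\<close>.\<close>

definition log_kernel :: "real \<Rightarrow> real \<Rightarrow> real \<Rightarrow> real \<Rightarrow> ennreal" where
  "log_kernel \<eta> \<theta> s t =
     nlog \<bar>exp (- s) powr \<theta> - exp (- t) powr \<theta>\<bar> + nlog \<bar>exp (- s) powr \<eta> - exp (- t) powr \<eta>\<bar>"

lemma log_kernel_measurable [measurable]:
  "(\<lambda>(s, t). log_kernel \<eta> \<theta> s t) \<in> borel_measurable (lborel \<Otimes>\<^sub>M lborel)"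
  "log_kernel \<eta> \<theta> s \<in> borel_measurable borel"
  unfolding log_kernel_def by measurable

lemma log_kernel_commute: "log_kernel \<eta> \<theta> s t = log_kernel \<eta> \<theta> t s"
  unfolding log_kernel_def by (simp add: abs_minus_commute)

lemma log_kernel_ge_min:
  assumes "0 < \<theta>"
  shows "ennreal (\<theta> * min s t) \<le> log_kernel \<eta> \<theta> s t"
proof -
  have "\<bar>exp (- s) powr \<theta> - exp (- t) powr \<theta>\<bar> \<le> exp (- (\<theta> * min s t))"
    using assms by (auto simp: exp_powr_real min_def abs_if mult.commute)
  then have "ennreal (\<theta> * min s t) \<le> nlog \<bar>exp (- s) powr \<theta> - exp (- t) powr \<theta>\<bar>"
    using nlog_antimono nlog_exp_neg by metis
  then show ?thesis
    unfolding log_kernel_def by (meson add_increasing2 zero_le)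
qed

lemma nlog_exp_powr_diff_le_separated:
  assumes "0 < c" "0 \<le> s" "s + 1 \<le> t"
  shows "nlog \<bar>exp (- s) powr c - exp (- t) powr c\<bar> \<le> ennreal (c * s - ln (1 - exp (- c)))"
proof -
  have "exp (- t * c) \<le> exp (- (s + 1) * c)"
    using assms by (intro exp_mono mult_right_mono) auto
  also have "\<dots> = exp (- s * c) * exp (- c)"
    by (simp add: algebra_simps flip: exp_add)
  finally have "exp (- s * c) * (1 - exp (- c)) \<le> \<bar>exp (- s) powr c - exp (- t) powr c\<bar>"
    by (simp add: exp_powr_real algebra_simps)
  then have "nlog \<bar>exp (- s) powr c - exp (- t) powr c\<bar> \<le> nlog (exp (- s * c) * (1 - exp (- c)))"
    by (rule nlog_antimono)
  also have "\<dots> = ennreal (c * s - ln (1 - exp (- c)))"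
    using assms by (simp add: nlog_def ln_mult mult.commute not_le zero_less_mult_iff del: exp_minus)
  finally show ?thesis .
qed

definition separation_const :: "real \<Rightarrow> real \<Rightarrow> real" where
  "separation_const \<eta> \<theta> = - ln (1 - exp (- \<theta>)) - ln (1 - exp (- \<eta>))"

lemma separation_const_nonneg:
  assumes "0 < \<eta>" "0 < \<theta>"
  shows "0 \<le> separation_const \<eta> \<theta>"
proof -
  have "ln (1 - exp (- c)) \<le> 0" if "0 < c" for c :: real
    using that by simp
  from this[OF assms(1)] this[OF assms(2)] show ?thesis
    unfolding separation_const_def by linarith
qed

lemma log_kernel_le_separated:
  assumes "0 < \<eta>" "0 < \<theta>" "0 \<le> s" "s + 1 \<le> t"
  shows "log_kernel \<eta> \<theta> s t \<le> ennreal ((\<theta> + \<eta>) * s + separation_const \<eta> \<theta>)"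
proof -
  have "0 \<le> - ln (1 - exp (- c))" if "0 < c" for c :: real
    using that by simp
  with assms have nonneg: "0 \<le> \<theta> * s - ln (1 - exp (- \<theta>))" "0 \<le> \<eta> * s - ln (1 - exp (- \<eta>))"
    by (metis add_nonneg_nonneg diff_conv_add_uminus mult_nonneg_nonneg less_imp_le)+
  have "log_kernel \<eta> \<theta> s t
      \<le> ennreal (\<theta> * s - ln (1 - exp (- \<theta>))) + ennreal (\<eta> * s - ln (1 - exp (- \<eta>)))"
    unfolding log_kernel_def using assms by (intro add_mono nlog_exp_powr_diff_le_separated)
  also have "\<dots> = ennreal ((\<theta> + \<eta>) * s + separation_const \<eta> \<theta>)"
    using nonneg by (simp add: separation_const_def algebra_simps flip: ennreal_plus)
  finally show ?thesis .
qed

lemma log_kernel_shift_le: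
  assumes "0 < \<eta>" "0 < \<theta>" "0 \<le> d"
  shows "log_kernel \<eta> \<theta> (s + d) (t + d) \<le> log_kernel \<eta> \<theta> s t + ennreal ((\<theta> + \<eta>) * d)"
proof -
  have shift: "\<bar>exp (- (s + d)) powr c - exp (- (t + d)) powr c\<bar>
      = exp (- (c * d)) * \<bar>exp (- s) powr c - exp (- t) powr c\<bar>" for c
  proof -
    have "exp (- (x + d)) powr c = exp (- (c * d)) * exp (- x) powr c" for x
      by (simp add: exp_powr_real algebra_simps flip: exp_add)
    then show ?thesis
      by (simp add: abs_mult flip: right_diff_distrib del: exp_minus)
  qed
  have "log_kernel \<eta> \<theta> (s + d) (t + d)
      \<le> (nlog \<bar>exp (- s) powr \<theta> - exp (- t) powr \<theta>\<bar> + ennreal (\<theta> * d))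
        + (nlog \<bar>exp (- s) powr \<eta> - exp (- t) powr \<eta>\<bar> + ennreal (\<eta> * d))"
    unfolding log_kernel_def shift using assms by (intro add_mono nlog_exp_neg_mult_le) auto
  also have "\<dots> = log_kernel \<eta> \<theta> s t + ennreal ((\<theta> + \<eta>) * d)"
    unfolding log_kernel_def using assms by (simp add: algebra_simps flip: ennreal_plus)
  finally show ?thesis .
qed

section \<open>Convergence of integrals at infinity\<close>

lemma nn_integral_dominated_convergence_at_top:
  fixes u :: "real \<Rightarrow> 'a \<Rightarrow> ennreal"
  assumes [measurable]: "\<And>M. u M \<in> borel_measurable N" "v \<in> borel_measurable N" "w \<in> borel_measurable N"
    and bound: "\<And>M x. u M x \<le> w x" and w: "(\<integral>\<^sup>+x. w x \<partial>N) < \<infinity>"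
    and lim: "\<And>x. ((\<lambda>M. u M x) \<longlongrightarrow> v x) at_top"
  shows "((\<lambda>M. \<integral>\<^sup>+x. u M x \<partial>N) \<longlongrightarrow> (\<integral>\<^sup>+x. v x \<partial>N)) at_top"
proof (rule tendsto_at_topI_sequentially)
  fix X :: "nat \<Rightarrow> real"
  assume X: "filterlim X at_top sequentially"
  show "(\<lambda>n. \<integral>\<^sup>+x. u (X n) x \<partial>N) \<longlonglongrightarrow> (\<integral>\<^sup>+x. v x \<partial>N)"
    using bound w filterlim_compose[OF lim X]
    by (intro nn_integral_dominated_convergence[where w=w]) auto
qed

lemma nn_integral_indicator_atMost_tendsto:
  fixes h :: "'a \<Rightarrow> ennreal" and p :: "'a \<Rightarrow> real" and c :: "real \<Rightarrow> real"
  assumes [measurable]: "h \<in> borel_measurable N" "p \<in> borel_measurable N"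
    and fin: "(\<integral>\<^sup>+x. h x \<partial>N) < \<infinity>" and c: "filterlim c at_top at_top"
  shows "((\<lambda>M. \<integral>\<^sup>+x. h x * indicator {..c M} (p x) \<partial>N) \<longlongrightarrow> (\<integral>\<^sup>+x. h x \<partial>N)) at_top"
proof (rule nn_integral_dominated_convergence_at_top[where w=h])
  fix x
  have "eventually (\<lambda>M. p x \<le> c M) at_top"
    using c by (simp add: filterlim_at_top)
  then have "eventually (\<lambda>M. h x * indicator {..c M} (p x) = h x) at_top"
    by (rule eventually_mono) (simp add: indicator_def)
  then show "((\<lambda>M. h x * indicator {..c M} (p x)) \<longlongrightarrow> h x) at_top"
    by (rule tendsto_eventually)
qed (use fin in \<open>auto simp: indicator_def\<close>)

lemma nn_integral_indicator_greaterThan_tendsto_0: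
  fixes h :: "'a \<Rightarrow> ennreal" and p :: "'a \<Rightarrow> real" and c :: "real \<Rightarrow> real"
  assumes [measurable]: "h \<in> borel_measurable N" "p \<in> borel_measurable N"
    and fin: "(\<integral>\<^sup>+x. h x \<partial>N) < \<infinity>" and c: "filterlim c at_top at_top"
  shows "((\<lambda>M. \<integral>\<^sup>+x. h x * indicator {c M<..} (p x) \<partial>N) \<longlongrightarrow> 0) at_top"
proof -
  have "((\<lambda>M. \<integral>\<^sup>+x. h x * indicator {c M<..} (p x) \<partial>N) \<longlongrightarrow> (\<integral>\<^sup>+x. 0 \<partial>N)) at_top"
  proof (rule nn_integral_dominated_convergence_at_top[where w=h])
    fix x
    have "eventually (\<lambda>M. p x \<le> c M) at_top"
      using c by (simp add: filterlim_at_top)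
    then have "eventually (\<lambda>M. h x * indicator {c M<..} (p x) = 0) at_top"
      by (rule eventually_mono) (simp add: indicator_def)
    then show "((\<lambda>M. h x * indicator {c M<..} (p x)) \<longlongrightarrow> 0) at_top"
      by (rule tendsto_eventually)
  qed (use fin in \<open>auto simp: indicator_def\<close>)
  then show ?thesis
    by simp
qed

lemma tendsto_0_if_cmult_le:
  fixes X Z :: "real \<Rightarrow> ennreal"
  assumes "0 < c" "\<And>M. ennreal c * X M \<le> Z M" "(Z \<longlongrightarrow> 0) at_top"
  shows "(X \<longlongrightarrow> 0) at_top"
proof -
  have le: "X M \<le> ennreal (1 / c) * Z M" for M
    using mult_left_mono[OF assms(2)[of M], of "ennreal (1 / c)"] assms(1)
    by (simp add: mult.assoc[symmetric] flip: ennreal_mult)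
  have "((\<lambda>M. ennreal (1 / c) * Z M) \<longlongrightarrow> 0) at_top"
    using ennreal_tendsto_cmult[OF _ assms(3), of "ennreal (1 / c)"] by simp
  from tendsto_sandwich[OF _ _ tendsto_const this] show ?thesis
    using le by (simp add: always_eventually)
qed

lemma ennreal_tendsto_cmult_if_finite:
  fixes c X :: ennreal and Y :: "real \<Rightarrow> ennreal"
  assumes "c * X < \<infinity>" "c < \<infinity>" "X < \<infinity> \<Longrightarrow> (Y \<longlongrightarrow> X) at_top"
  shows "((\<lambda>M. c * Y M) \<longlongrightarrow> c * X) at_top"
proof (cases "c = 0")
  case False
  then have "X < \<infinity>"
    using assms(1) by (auto simp: ennreal_mult_less_top)
  then show ?thesis
    using assms(2,3) by (intro ennreal_tendsto_cmult) auto
qed simp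

lemma nn_integral_lborel_pair_mult:
  fixes a b :: "real \<Rightarrow> ennreal"
  assumes [measurable]: "a \<in> borel_measurable borel" "b \<in> borel_measurable borel"
  shows "(\<integral>\<^sup>+x. a x \<partial>lborel) * (\<integral>\<^sup>+y. b y \<partial>lborel) = (\<integral>\<^sup>+p. a (fst p) * b (snd p) \<partial>(lborel \<Otimes>\<^sub>M lborel))"
proof -
  have "(\<integral>\<^sup>+x. a x \<partial>lborel) * (\<integral>\<^sup>+y. b y \<partial>lborel) = (\<integral>\<^sup>+x. \<integral>\<^sup>+y. a x * b y \<partial>lborel \<partial>lborel)"
    by (simp add: nn_integral_cmult flip: nn_integral_multc)
  then show ?thesis
    by (simp add: lborel.nn_integral_fst[symmetric] split_beta')
qed

lemma integral_density_eq_shifted_nn_integral: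
  fixes u h :: "real \<Rightarrow> real"
  assumes [measurable]: "u \<in> borel_measurable borel" "h \<in> borel_measurable borel"
    and u: "\<And>x. 0 \<le> u x" "(\<integral>\<^sup>+x. ennreal (u x) \<partial>lborel) = 1" and h: "\<And>x. \<bar>h x\<bar> \<le> B"
  shows "(\<integral>x. h x \<partial>density lborel (\<lambda>x. ennreal (u x)))
       = enn2real (\<integral>\<^sup>+x. ennreal (u x) * ennreal (h x + B) \<partial>lborel) - B"
proof -
  have int_u: "integrable lborel u" and mass: "(\<integral>x. u x \<partial>lborel) = 1"
    using u nn_integral_eq_integrable[of u lborel 1] by auto
  have int_uB: "integrable lborel (\<lambda>x. u x * (h x + B))"
  proof (rule Bochner_Integration.integrable_bound)
    show "integrable lborel (\<lambda>x. 2 * B * u x)"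
      using int_u by simp
    have "\<bar>u x * (h x + B)\<bar> \<le> 2 * B * u x" for x
      using mult_left_mono[of "\<bar>h x + B\<bar>" "2 * B" "u x"] h[of x] u(1)[of x]
      by (simp add: abs_mult abs_le_iff mult.commute)
    then show "AE x in lborel. norm (u x * (h x + B)) \<le> norm (2 * B * u x)"
      by (intro always_eventually allI) (simp add: order_trans[OF _ abs_ge_self])
  qed simp
  have "(\<integral>x. u x * h x \<partial>lborel) = (\<integral>x. u x * (h x + B) - B * u x \<partial>lborel)"
    by (simp add: algebra_simps)
  also have "\<dots> = (\<integral>x. u x * (h x + B) \<partial>lborel) - B"
    using int_uB int_u mass by simp
  also have "(\<integral>x. u x * (h x + B) \<partial>lborel) = enn2real (\<integral>\<^sup>+x. ennreal (u x) * ennreal (h x + B) \<partial>lborel)"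
  proof -
    have "0 \<le> h x + B" for x
      using h[of x] by (simp add: abs_le_iff)
    then show ?thesis
      using u by (subst integral_eq_nn_integral) (auto simp: ennreal_mult)
  qed
  finally show ?thesis
    using u by (simp add: integral_density)
qed

section \<open>The rate function in terms of densities\<close>

lemma nn_integral_distr_exp_density:
  fixes g :: "real \<Rightarrow> real" and h :: "real \<Rightarrow> ennreal"
  assumes [measurable]: "g \<in> borel_measurable borel" "h \<in> borel_measurable borel"
  shows "(\<integral>\<^sup>+x. h x \<partial>distr (density lborel (\<lambda>x. ennreal (g x))) borel (\<lambda>x. exp (- x)))
       = (\<integral>\<^sup>+s. ennreal (g s) * h (exp (- s)) \<partial>lborel)"
proof -
  have "(\<lambda>x::real. exp (- x)) \<in> density lborel (\<lambda>x. ennreal (g x)) \<rightarrow>\<^sub>M borel"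
    by (simp add: measurable_cong_sets[OF sets_density refl])
  then show ?thesis
    by (simp add: nn_integral_distr nn_integral_density)
qed

definition pair_energy :: "real \<Rightarrow> real \<Rightarrow> (real \<Rightarrow> real) \<Rightarrow> (real \<Rightarrow> real) \<Rightarrow> ennreal" where
  "pair_energy \<eta> \<theta> a b =
     (\<integral>\<^sup>+s. ennreal (a s) * (\<integral>\<^sup>+t. ennreal (b t) * log_kernel \<eta> \<theta> s t \<partial>lborel) \<partial>lborel)"

lemma pair_energy_iterated:
  assumes [measurable]: "b \<in> borel_measurable borel"
  shows "pair_energy \<eta> \<theta> a b
       = (\<integral>\<^sup>+s. \<integral>\<^sup>+t. ennreal (a s) * ennreal (b t) * log_kernel \<eta> \<theta> s t \<partial>lborel \<partial>lborel)"
  unfolding pair_energy_def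
  by (intro nn_integral_cong) (simp add: mult.assoc flip: nn_integral_cmult)

lemma pair_energy_product:
  assumes [measurable]: "a \<in> borel_measurable borel" "b \<in> borel_measurable borel"
  shows "pair_energy \<eta> \<theta> a b
       = (\<integral>\<^sup>+p. ennreal (a (fst p)) * ennreal (b (snd p)) * log_kernel \<eta> \<theta> (fst p) (snd p) \<partial>(lborel \<Otimes>\<^sub>M lborel))"
  by (simp add: pair_energy_iterated lborel.nn_integral_fst[symmetric] split_beta')

lemma pair_energy_commute:
  assumes [measurable]: "a \<in> borel_measurable borel" "b \<in> borel_measurable borel"
  shows "pair_energy \<eta> \<theta> a b = pair_energy \<eta> \<theta> b a"
  unfolding pair_energy_iterated[OF assms(1)] pair_energy_iterated[OF assms(2)]
  by (subst lborel_pair.Fubini') (simp_all add: log_kernel_commute mult_ac)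

lemma pair_energy_add_left:
  assumes [measurable]: "a \<in> borel_measurable borel" "a' \<in> borel_measurable borel" "b \<in> borel_measurable borel"
    and "\<And>x. 0 \<le> a x" "\<And>x. 0 \<le> a' x"
  shows "pair_energy \<eta> \<theta> (\<lambda>x. a x + a' x) b = pair_energy \<eta> \<theta> a b + pair_energy \<eta> \<theta> a' b"
  unfolding pair_energy_product[OF assms(1,3)] pair_energy_product[OF assms(2,3)]
  by (subst pair_energy_product) (simp_all add: assms(4,5) distrib_right nn_integral_add)

lemma pair_energy_add_right:
  assumes [measurable]: "a \<in> borel_measurable borel" "b \<in> borel_measurable borel" "b' \<in> borel_measurable borel"
    and "\<And>x. 0 \<le> b x" "\<And>x. 0 \<le> b' x"
  shows "pair_energy \<eta> \<theta> a (\<lambda>x. b x + b' x) = pair_energy \<eta> \<theta> a b + pair_energy \<eta> \<theta> a b'"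
  using pair_energy_add_left[of b b' a] assms by (simp add: pair_energy_commute[of a])

definition Kneg_inner :: "real \<Rightarrow> real \<Rightarrow> real \<Rightarrow> real \<Rightarrow> real \<Rightarrow> real \<Rightarrow> ennreal" where
  "Kneg_inner \<eta> \<theta> \<beta> \<gamma> \<xi> x =
     (if \<xi> \<le> 0 then
        (\<integral>\<^sup>+u\<in>{\<gamma>\<^sup>2 - 1..\<bar>\<xi>\<bar>}. nlog (1 - x powr \<theta> * exp (\<beta> * \<theta> * u)) \<partial>lborel)
      else if \<xi> \<le> 1 - \<gamma>\<^sup>2 then
        (\<integral>\<^sup>+u\<in>{0..1 - \<gamma>\<^sup>2 - \<xi>}. nlog (1 - x powr \<theta> * exp (- \<beta> * \<theta> * u)) \<partial>lborel)
      else
        (\<integral>\<^sup>+u\<in>{1 - \<gamma>\<^sup>2 - \<xi>..0}. nlog (1 - x powr \<eta> * exp (- \<beta> * \<eta> * u)) \<partial>lborel))"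

lemma Kneg_inner_measurable [measurable]: "Kneg_inner \<eta> \<theta> \<beta> \<gamma> \<xi> \<in> borel_measurable borel"
proof -
  have "Kneg_inner \<eta> \<theta> \<beta> \<gamma> \<xi> \<in> borel_measurable lborel"
    unfolding Kneg_inner_def by measurable
  then show ?thesis
    by simp
qed

lemma Kneg_inner_exp_antimono:
  assumes "0 < \<eta>" "0 < \<theta>" "0 \<le> d"
  shows "Kneg_inner \<eta> \<theta> \<beta> \<gamma> \<xi> (exp (- (s + d))) \<le> Kneg_inner \<eta> \<theta> \<beta> \<gamma> \<xi> (exp (- s))"
proof -
  have "nlog (1 - exp (- (s + d)) powr c * e) * indicator I u \<le> nlog (1 - exp (- s) powr c * e) * indicator I u"
    if "0 < c" "0 < e" for c e :: real and I and u :: real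
  proof -
    have "exp (- (s + d)) powr c \<le> exp (- s) powr c"
      using assms that by (intro powr_mono2) auto
    then show ?thesis
      using that by (intro mult_right_mono nlog_antimono) (auto simp: mult_right_mono)
  qed
  then show ?thesis
    unfolding Kneg_inner_def using assms by (auto intro!: nn_integral_mono)
qed

definition Mneg_coeff :: "real \<Rightarrow> real \<Rightarrow> real \<Rightarrow> real \<Rightarrow> ennreal" where
  "Mneg_coeff \<eta> \<theta> \<gamma> \<xi> =
     (if \<xi> \<le> 0 then ennreal (kappa \<gamma> \<xi> * \<eta> * \<bar>\<xi>\<bar>) else ennreal (kappa \<gamma> \<xi> * \<theta> * \<xi>))"

lemma Itilde_density:
  fixes g :: "real \<Rightarrow> real"
  assumes [measurable]: "g \<in> borel_measurable borel"
  shows "Itilde \<eta> \<theta> \<beta> \<gamma> \<xi> (density lborel (\<lambda>x. ennreal (g x)))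
    = ennreal ((kappa \<gamma> \<xi>)\<^sup>2 / 2) * pair_energy \<eta> \<theta> g g
      + ennreal (kappa \<gamma> \<xi>) * (\<integral>\<^sup>+s. ennreal (g s) * Kneg_inner \<eta> \<theta> \<beta> \<gamma> \<xi> (exp (- s)) \<partial>lborel)
      + Mneg_coeff \<eta> \<theta> \<gamma> \<xi> * (\<integral>\<^sup>+s. ennreal (g s) * ennreal s \<partial>lborel)"
proof -
  define \<mu> where "\<mu> = distr (density lborel (\<lambda>x. ennreal (g x))) borel (\<lambda>x. exp (- x))"
  define F where "F x y = nlog \<bar>x powr \<theta> - y powr \<theta>\<bar> + nlog \<bar>x powr \<eta> - y powr \<eta>\<bar>" for x y :: real
  have [measurable]: "F x \<in> borel_measurable borel" for x
    unfolding F_def by measurable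
  have inner: "(\<integral>\<^sup>+y. F x y \<partial>\<mu>) = (\<integral>\<^sup>+t. ennreal (g t) * F x (exp (- t)) \<partial>lborel)" for x
    unfolding \<mu>_def by (rule nn_integral_distr_exp_density) measurable
  have "(\<lambda>x. \<integral>\<^sup>+t. ennreal (g t) * F x (exp (- t)) \<partial>lborel) \<in> borel_measurable lborel"
    unfolding F_def by measurable
  then have "(\<integral>\<^sup>+x. (\<integral>\<^sup>+y. F x y \<partial>\<mu>) \<partial>\<mu>) = pair_energy \<eta> \<theta> g g"
    unfolding inner unfolding \<mu>_def
    by (subst nn_integral_distr_exp_density) (simp_all add: pair_energy_def F_def log_kernel_def)
  then have H: "Hneg \<eta> \<theta> \<gamma> \<xi> \<mu> = ennreal ((kappa \<gamma> \<xi>)\<^sup>2 / 2) * pair_energy \<eta> \<theta> g g"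
    unfolding Hneg_def F_def by simp
  have "Kneg \<eta> \<theta> \<beta> \<gamma> \<xi> \<mu> = ennreal (kappa \<gamma> \<xi>) * (\<integral>\<^sup>+x. Kneg_inner \<eta> \<theta> \<beta> \<gamma> \<xi> x \<partial>\<mu>)"
    unfolding Kneg_def Kneg_inner_def by (cases "\<xi> \<le> 0"; cases "\<xi> \<le> 1 - \<gamma>\<^sup>2") simp_all
  then have K: "Kneg \<eta> \<theta> \<beta> \<gamma> \<xi> \<mu>
      = ennreal (kappa \<gamma> \<xi>) * (\<integral>\<^sup>+s. ennreal (g s) * Kneg_inner \<eta> \<theta> \<beta> \<gamma> \<xi> (exp (- s)) \<partial>lborel)"
    unfolding \<mu>_def by (simp add: nn_integral_distr_exp_density)
  have M: "Mneg \<eta> \<theta> \<gamma> \<xi> \<mu> = Mneg_coeff \<eta> \<theta> \<gamma> \<xi> * (\<integral>\<^sup>+s. ennreal (g s) * ennreal s \<partial>lborel)"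
    unfolding Mneg_def Mneg_coeff_def[symmetric] \<mu>_def
    by (simp add: nn_integral_distr_exp_density nlog_exp_neg)
  show ?thesis
    unfolding Itilde_def Ixi_def \<mu>_def[symmetric] H K M ..
qed

lemma Qset_obtain_density:
  assumes "lam \<in> Qset \<beta> \<gamma> \<xi>"
  obtains f where "f \<in> borel_measurable borel" "\<And>x. 0 \<le> f x"
    "\<And>x. x < \<beta> * (\<gamma>\<^sup>2 - kappa \<gamma> \<xi>) \<Longrightarrow> f x = 0" "\<And>x. \<beta> * kappa \<gamma> \<xi> * f x \<le> 1"
    "(\<integral>\<^sup>+x. ennreal (f x) \<partial>lborel) = 1" "lam = density lborel (\<lambda>x. ennreal (f x))"
proof -
  define a where "a = \<beta> * (\<gamma>\<^sup>2 - kappa \<gamma> \<xi>)"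
  obtain f0 where [measurable]: "f0 \<in> borel_measurable borel" and f0: "\<And>x. 0 \<le> f0 x" "\<And>x. \<beta> * kappa \<gamma> \<xi> * f0 x \<le> 1"
    and lam: "lam = density lborel (\<lambda>x. ennreal (f0 x))" and "prob_space lam" "emeasure lam {..<a} = 0"
    using assms unfolding Qset_def a_def by blast
  define f where "f x = f0 x * indicator {a..} x" for x
  have [measurable]: "f \<in> borel_measurable borel"
    unfolding f_def by measurable
  have "AE x in lborel. ennreal (f0 x) * indicator {..<a} x = 0"
    using \<open>emeasure lam {..<a} = 0\<close> unfolding lam
    by (simp add: emeasure_density nn_integral_0_iff_AE)
  then have "AE x in lborel. ennreal (f0 x) = ennreal (f x)"
    by eventually_elim (auto simp: f_def indicator_def split: if_splits)
  then have lam_f: "lam = density lborel (\<lambda>x. ennreal (f x))"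
    unfolding lam by (intro density_cong) auto
  moreover have "(\<integral>\<^sup>+x. ennreal (f x) \<partial>lborel) = 1"
    using prob_space.emeasure_space_1[OF \<open>prob_space lam\<close>] unfolding lam_f
    by (simp add: emeasure_density)
  moreover have "\<beta> * kappa \<gamma> \<xi> * f x \<le> 1" for x
    using f0(2)[of x] by (simp add: f_def indicator_def)
  ultimately show ?thesis
    using f0(1) by (intro that[of f]) (auto simp: f_def a_def)
qed

lemma density_in_Qset:
  assumes [measurable]: "g \<in> borel_measurable borel" and "\<And>x. 0 \<le> g x"
    and "\<And>x. x < \<beta> * (\<gamma>\<^sup>2 - kappa \<gamma> \<xi>) \<Longrightarrow> g x = 0" and "\<And>x. \<beta> * kappa \<gamma> \<xi> * g x \<le> 1"
    and mass: "(\<integral>\<^sup>+x. ennreal (g x) \<partial>lborel) = 1"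
  shows "density lborel (\<lambda>x. ennreal (g x)) \<in> Qset \<beta> \<gamma> \<xi>"
proof -
  have "(\<integral>\<^sup>+x. ennreal (g x) * indicator {..<\<beta> * (\<gamma>\<^sup>2 - kappa \<gamma> \<xi>)} x \<partial>lborel) = (\<integral>\<^sup>+(x::real). 0 \<partial>lborel)"
  proof (rule nn_integral_cong)
    fix x
    show "ennreal (g x) * indicator {..<\<beta> * (\<gamma>\<^sup>2 - kappa \<gamma> \<xi>)} x = 0"
      using assms(3)[of x] by (cases "x < \<beta> * (\<gamma>\<^sup>2 - kappa \<gamma> \<xi>)") simp_all
  qed
  then have "emeasure (density lborel (\<lambda>x. ennreal (g x))) {..<\<beta> * (\<gamma>\<^sup>2 - kappa \<gamma> \<xi>)} = 0"
    by (simp add: emeasure_density)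
  moreover have "prob_space (density lborel (\<lambda>x. ennreal (g x)))"
    by (rule prob_spaceI) (simp add: emeasure_density mass)
  ultimately show ?thesis
    unfolding Qset_def using assms(1,2,4) by (intro CollectI conjI bexI[of _ g]) auto
qed

lemma compactly_supported_density:
  assumes "compact C" "\<And>x. g x \<noteq> 0 \<Longrightarrow> x \<in> C" "g \<in> borel_measurable borel"
  shows "compactly_supported (density lborel (\<lambda>x. ennreal (g x)))"
  unfolding compactly_supported_def
proof (intro exI conjI)
  have "(\<integral>\<^sup>+x. ennreal (g x) * indicator (UNIV - C) x \<partial>lborel) = (\<integral>\<^sup>+(x::real). 0 \<partial>lborel)"
  proof (rule nn_integral_cong)
    fix x
    show "ennreal (g x) * indicator (UNIV - C) x = 0"
      using assms(2)[of x] by (cases "g x = 0") auto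
  qed
  then show "emeasure (density lborel (\<lambda>x. ennreal (g x))) (UNIV - C) = 0"
    using assms(1,3) by (simp add: emeasure_density compact_imp_closed borel_closed)
qed fact

lemma exists_half_mass_radius:
  fixes f :: "real \<Rightarrow> real"
  assumes "integrable lborel f" "(\<integral>x. f x \<partial>lborel) = 1"
  obtains K where "0 \<le> K" "1/2 \<le> (\<integral>x. f x * indicator {..K} x \<partial>lborel)"
proof -
  have "((\<lambda>K. \<integral>x. f x * indicator {..K} x \<partial>lborel) \<longlongrightarrow> 1) at_top"
    using tendsto_integral_at_top[OF _ assms(1)] assms(2) by (simp add: mult.commute)
  then have "eventually (\<lambda>K. 1/2 < (\<integral>x. f x * indicator {..K} x \<partial>lborel)) at_top"
    by (rule order_tendstoD) simp
  then obtain K0 where K0: "\<And>K. K0 \<le> K \<Longrightarrow> 1/2 < (\<integral>x. f x * indicator {..K} x \<partial>lborel)"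
    by (auto simp: eventually_at_top_linorder)
  show ?thesis
  proof (rule that)
    show "1/2 \<le> (\<integral>x. f x * indicator {..max K0 0} x \<partial>lborel)"
      by (rule less_imp_le[OF K0]) simp
  qed simp
qed

section \<open>Relocating the tail of a density\<close>

text \<open>The bulk condition on \<open>K\<close> makes \<open>tail_ratio M \<le> 1\<close>, so \<open>approx M\<close> never exceeds a
  translate of \<open>f\<close>.\<close>

locale tail_relocation =
  fixes f :: "real \<Rightarrow> real" and K :: real
  assumes f_measurable [measurable]: "f \<in> borel_measurable borel"
    and f_nonneg: "\<And>x. 0 \<le> f x"
    and f_vanishes_neg: "\<And>x. x < 0 \<Longrightarrow> f x = 0"
    and f_integrable: "integrable lborel f"
    and f_integral: "(\<integral>x. f x \<partial>lborel) = 1"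
    and K_nonneg: "0 \<le> K"
    and bulk_ge_half: "1/2 \<le> (\<integral>x. f x * indicator {..K} x \<partial>lborel)"
begin

definition "cutoff M = max M K"

definition "tail M = (\<integral>x. f x * indicator {cutoff M<..} x \<partial>lborel)"

definition "bulk = (\<integral>x. f x * indicator {..K} x \<partial>lborel)"

definition "tail_ratio M = tail M / bulk"

definition "trunc M x = f x * indicator {..cutoff M} x"

definition "moved M x = tail_ratio M * (f (x - (cutoff M + 1)) * indicator {..K} (x - (cutoff M + 1)))"

definition "approx M x = trunc M x + moved M x"

lemma trunc_measurable [measurable]: "trunc M \<in> borel_measurable borel"
  and moved_measurable [measurable]: "moved M \<in> borel_measurable borel"
  and approx_measurable [measurable]: "approx M \<in> borel_measurable borel"
  unfolding trunc_def moved_def approx_def by measurable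

lemma cutoff_ge: "K \<le> cutoff M" "M \<le> cutoff M" "0 \<le> cutoff M"
  using K_nonneg by (auto simp: cutoff_def)

lemma filterlim_cutoff: "filterlim cutoff at_top at_top"
  by (rule filterlim_at_top_mono[OF filterlim_ident]) (simp add: cutoff_def)

lemma integrable_f_indicator: "integrable lborel (\<lambda>x. f x * indicator A x)" if "A \<in> sets borel"
  using that f_integrable by (simp add: integrable_real_mult_indicator)

lemma nn_integral_f_indicator:
  "A \<in> sets borel \<Longrightarrow> (\<integral>\<^sup>+x. ennreal (f x * indicator A x) \<partial>lborel) = ennreal (\<integral>x. f x * indicator A x \<partial>lborel)"
  by (intro nn_integral_eq_integral integrable_f_indicator) (auto simp: f_nonneg)

lemma nn_integral_f_mass: "(\<integral>\<^sup>+x. ennreal (f x) \<partial>lborel) = 1"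
  using f_integrable f_integral by (simp add: nn_integral_eq_integral f_nonneg)

lemma integral_f_split: "(\<integral>x. f x * indicator {..c} x \<partial>lborel) + (\<integral>x. f x * indicator {c<..} x \<partial>lborel) = 1"
proof -
  have "(\<integral>x. f x * indicator {..c} x \<partial>lborel) + (\<integral>x. f x * indicator {c<..} x \<partial>lborel)
      = (\<integral>x. f x * indicator {..c} x + f x * indicator {c<..} x \<partial>lborel)"
    by (intro Bochner_Integration.integral_add[symmetric] integrable_f_indicator) auto
  also have "\<dots> = (\<integral>x. f x \<partial>lborel)"
    by (intro Bochner_Integration.integral_cong) (auto simp: indicator_def)
  finally show ?thesis
    by (simp add: f_integral)
qed

lemma bulk_pos: "0 < bulk"
  using bulk_ge_half by (simp add: bulk_def)

lemma tail_nonneg: "0 \<le> tail M"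
  unfolding tail_def by (simp add: f_nonneg)

lemma tail_le_bulk: "tail M \<le> bulk"
proof -
  have "tail M \<le> (\<integral>x. f x * indicator {K<..} x \<partial>lborel)"
    unfolding tail_def using cutoff_ge(1)[of M]
    by (intro integral_mono integrable_f_indicator) (auto simp: f_nonneg indicator_def)
  then show ?thesis
    using integral_f_split[of K] bulk_ge_half unfolding bulk_def by linarith
qed

lemma tail_ratio_nonneg: "0 \<le> tail_ratio M" and tail_ratio_le_1: "tail_ratio M \<le> 1"
  using tail_nonneg[of M] tail_le_bulk[of M] bulk_ge_half
  by (auto simp: tail_ratio_def bulk_def)

lemma tail_ratio_mult_bulk: "tail_ratio M * bulk = tail M"
  using bulk_ge_half by (simp add: tail_ratio_def bulk_def)

lemma tail_tendsto_0: "(tail \<longlongrightarrow> 0) at_top"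
proof -
  have "((\<lambda>M. \<integral>x. indicator {..cutoff M} x *\<^sub>R f x \<partial>lborel) \<longlongrightarrow> 1) at_top"
    using tendsto_integral_at_top[OF _ f_integrable] f_integral filterlim_cutoff
    by (auto intro: filterlim_compose)
  then have "((\<lambda>M. 1 - (\<integral>x. f x * indicator {..cutoff M} x \<partial>lborel)) \<longlongrightarrow> 1 - 1) at_top"
    by (intro tendsto_diff) (simp_all add: mult.commute)
  moreover have "tail = (\<lambda>M. 1 - (\<integral>x. f x * indicator {..cutoff M} x \<partial>lborel))"
    using integral_f_split unfolding tail_def by (simp add: fun_eq_iff algebra_simps)
  ultimately show ?thesis
    by simp
qed

lemma ennreal_tail: "ennreal (tail M) = (\<integral>\<^sup>+x. ennreal (f x * indicator {cutoff M<..} x) \<partial>lborel)"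
  by (simp add: nn_integral_f_indicator tail_def)

lemma ennreal_tail_tendsto_0: "((\<lambda>M. ennreal (tail M)) \<longlongrightarrow> 0) at_top"
  using tendsto_ennrealI[OF tail_tendsto_0] by simp

lemma tail_ratio_tendsto_0: "(tail_ratio \<longlongrightarrow> 0) at_top"
  using tendsto_divide_zero[OF tail_tendsto_0, of bulk] by (simp add: tail_ratio_def[abs_def])

lemma trunc_nonneg: "0 \<le> trunc M x" and moved_nonneg: "0 \<le> moved M x" and approx_nonneg: "0 \<le> approx M x"
  using f_nonneg tail_ratio_nonneg[of M] by (auto simp: trunc_def moved_def approx_def)

lemma trunc_support: "trunc M x \<noteq> 0 \<Longrightarrow> 0 \<le> x \<and> x \<le> cutoff M"
  using f_vanishes_neg[of x] by (cases "x < 0") (auto simp: trunc_def indicator_def)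

lemma moved_support: "moved M x \<noteq> 0 \<Longrightarrow> cutoff M + 1 \<le> x \<and> x \<le> cutoff M + 1 + K"
  using f_vanishes_neg[of "x - (cutoff M + 1)"] by (cases "x < cutoff M + 1") (auto simp: moved_def indicator_def)

lemma approx_support: "approx M x \<noteq> 0 \<Longrightarrow> x \<in> {0..cutoff M + 1 + K}"
  using trunc_support[of M x] moved_support[of M x] cutoff_ge[of M] K_nonneg
  by (cases "trunc M x = 0") (auto simp: approx_def)

lemma approx_le: "approx M x \<le> f x \<or> approx M x \<le> f (x - (cutoff M + 1))"
proof (cases "x \<le> cutoff M")
  case True
  then have "approx M x = trunc M x"
    using moved_support[of M x] by (auto simp: approx_def)
  then show ?thesis
    using f_nonneg[of x] by (auto simp: trunc_def indicator_def)
next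
  case False
  then have "approx M x = moved M x"
    by (simp add: approx_def trunc_def)
  then show ?thesis
    using tail_ratio_nonneg[of M] tail_ratio_le_1[of M] f_nonneg[of "x - (cutoff M + 1)"]
    by (auto simp: moved_def indicator_def intro: mult_left_le_one_le)
qed

lemma approx_vanishes_below:
  assumes "\<And>y. y < a \<Longrightarrow> f y = 0" "x < a"
  shows "approx M x = 0"
  using assms cutoff_ge(3)[of M] by (simp add: approx_def trunc_def moved_def)

lemma nn_integral_moved:
  fixes w :: "real \<Rightarrow> ennreal"
  assumes [measurable]: "w \<in> borel_measurable borel"
  shows "(\<integral>\<^sup>+x. ennreal (moved M x) * w x \<partial>lborel)
     = ennreal (tail_ratio M) * (\<integral>\<^sup>+u. ennreal (f u * indicator {..K} u) * w (u + (cutoff M + 1)) \<partial>lborel)"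
proof -
  have "(\<integral>\<^sup>+x. ennreal (moved M x) * w x \<partial>lborel)
      = (\<integral>\<^sup>+u. ennreal (moved M (u + (cutoff M + 1))) * w (u + (cutoff M + 1)) \<partial>lborel)"
    using nn_integral_real_affine[of "\<lambda>x. ennreal (moved M x) * w x" 1 "cutoff M + 1"]
    by (simp add: add.commute)
  also have "\<dots> = (\<integral>\<^sup>+u. ennreal (tail_ratio M) * (ennreal (f u * indicator {..K} u) * w (u + (cutoff M + 1))) \<partial>lborel)"
    using tail_ratio_nonneg[of M] f_nonneg
    by (intro nn_integral_cong) (simp add: moved_def ennreal_mult mult.assoc)
  finally show ?thesis
    by (simp add: nn_integral_cmult)
qed

lemma nn_integral_moved_mass: "(\<integral>\<^sup>+x. ennreal (moved M x) \<partial>lborel) = ennreal (tail M)"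
  using nn_integral_moved[of "\<lambda>_. 1" M] tail_ratio_nonneg[of M] bulk_ge_half
  by (simp add: nn_integral_f_indicator flip: bulk_def ennreal_mult tail_ratio_mult_bulk)

lemma nn_integral_trunc_mass: "(\<integral>\<^sup>+x. ennreal (trunc M x) \<partial>lborel) + ennreal (tail M) = 1"
  using integral_f_split[of "cutoff M"] tail_nonneg[of M]
  by (simp add: trunc_def nn_integral_f_indicator tail_def f_nonneg integral_nonneg flip: ennreal_plus)

lemma nn_integral_trunc_le_1: "(\<integral>\<^sup>+x. ennreal (trunc M x) \<partial>lborel) \<le> 1"
  using nn_integral_trunc_mass[of M] by (metis le_iff_add)

lemma nn_integral_approx_mass: "(\<integral>\<^sup>+x. ennreal (approx M x) \<partial>lborel) = 1"
proof -
  have "(\<integral>\<^sup>+x. ennreal (approx M x) \<partial>lborel)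
      = (\<integral>\<^sup>+x. ennreal (trunc M x) \<partial>lborel) + (\<integral>\<^sup>+x. ennreal (moved M x) \<partial>lborel)"
    by (simp add: approx_def trunc_nonneg moved_nonneg nn_integral_add)
  then show ?thesis
    using nn_integral_trunc_mass nn_integral_moved_mass by simp
qed

lemma density_approx_in_Qset:
  assumes below: "\<And>x. x < \<beta> * (\<gamma>\<^sup>2 - kappa \<gamma> \<xi>) \<Longrightarrow> f x = 0"
    and bound: "\<And>x. \<beta> * kappa \<gamma> \<xi> * f x \<le> 1" and "0 \<le> \<beta> * kappa \<gamma> \<xi>"
  shows "density lborel (\<lambda>x. ennreal (approx M x)) \<in> Qset \<beta> \<gamma> \<xi>"
proof (rule density_in_Qset[OF approx_measurable approx_nonneg _ _ nn_integral_approx_mass])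
  show "approx M x = 0" if "x < \<beta> * (\<gamma>\<^sup>2 - kappa \<gamma> \<xi>)" for x
    using approx_vanishes_below[OF below that] .
  show "\<beta> * kappa \<gamma> \<xi> * approx M x \<le> 1" for x
    using approx_le[of M x] bound[of x] bound[of "x - (cutoff M + 1)"]
      mult_left_mono[OF _ \<open>0 \<le> \<beta> * kappa \<gamma> \<xi>\<close>, of "approx M x"] by (meson order_trans)
qed

lemma compactly_supported_approx: "compactly_supported (density lborel (\<lambda>x. ennreal (approx M x)))"
  using approx_support by (intro compactly_supported_density[of "{0..cutoff M + 1 + K}"]) auto

lemma nn_integral_trunc_tendsto:
  fixes w :: "real \<Rightarrow> ennreal"
  assumes [measurable]: "w \<in> borel_measurable borel"
    and fin: "(\<integral>\<^sup>+s. ennreal (f s) * w s \<partial>lborel) < \<infinity>"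
  shows "((\<lambda>M. \<integral>\<^sup>+s. ennreal (trunc M s) * w s \<partial>lborel) \<longlongrightarrow> (\<integral>\<^sup>+s. ennreal (f s) * w s \<partial>lborel)) at_top"
proof -
  have "(\<lambda>M. \<integral>\<^sup>+s. ennreal (trunc M s) * w s \<partial>lborel)
      = (\<lambda>M. \<integral>\<^sup>+s. ennreal (f s) * w s * indicator {..cutoff M} s \<partial>lborel)"
    by (intro ext nn_integral_cong) (simp add: trunc_def indicator_def)
  then show ?thesis
    using fin filterlim_cutoff
    by (simp only:) (rule nn_integral_indicator_atMost_tendsto[where p="\<lambda>s. s"], auto)
qed

lemma nn_integral_moved_le:
  fixes w w' :: "real \<Rightarrow> ennreal"
  assumes [measurable]: "w \<in> borel_measurable borel" "w' \<in> borel_measurable borel"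
    and shift: "\<And>v. 0 \<le> v \<Longrightarrow> w (v + (cutoff M + 1)) \<le> w' v + c"
  shows "(\<integral>\<^sup>+s. ennreal (moved M s) * w s \<partial>lborel)
    \<le> ennreal (tail_ratio M) * (\<integral>\<^sup>+s. ennreal (f s) * w' s \<partial>lborel) + c * ennreal (tail M)"
proof -
  define fK where "fK u = ennreal (f u * indicator {..K} u)" for u
  have "fK u * w (u + (cutoff M + 1)) \<le> ennreal (f u) * w' u + c * fK u" for u
  proof (cases "u < 0")
    case False
    then have "fK u * w (u + (cutoff M + 1)) \<le> fK u * (w' u + c)"
      by (intro mult_left_mono shift) auto
    also have "\<dots> = fK u * w' u + c * fK u"
      by (simp add: distrib_left mult.commute[of _ c])
    also have "\<dots> \<le> ennreal (f u) * w' u + c * fK u"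
      using f_nonneg[of u] by (intro add_right_mono mult_right_mono ennreal_leI) (auto simp: fK_def indicator_def)
    finally show ?thesis .
  qed (simp add: fK_def f_vanishes_neg)
  then have "(\<integral>\<^sup>+s. ennreal (moved M s) * w s \<partial>lborel)
      \<le> ennreal (tail_ratio M) * (\<integral>\<^sup>+u. ennreal (f u) * w' u + c * fK u \<partial>lborel)"
    unfolding nn_integral_moved[OF assms(1)] fK_def by (intro mult_left_mono nn_integral_mono) auto
  also have "(\<integral>\<^sup>+u. ennreal (f u) * w' u + c * fK u \<partial>lborel) = (\<integral>\<^sup>+s. ennreal (f s) * w' s \<partial>lborel) + c * ennreal bulk"
    by (simp add: nn_integral_add nn_integral_cmult nn_integral_f_indicator fK_def bulk_def)
  also have "ennreal (tail_ratio M) * ((\<integral>\<^sup>+s. ennreal (f s) * w' s \<partial>lborel) + c * ennreal bulk)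
      = ennreal (tail_ratio M) * (\<integral>\<^sup>+s. ennreal (f s) * w' s \<partial>lborel) + c * (ennreal (tail_ratio M) * ennreal bulk)"
    by (simp add: distrib_left mult.left_commute)
  also have "ennreal (tail_ratio M) * ennreal bulk = ennreal (tail M)"
    using tail_ratio_nonneg[of M] bulk_pos by (simp add: tail_ratio_mult_bulk flip: ennreal_mult)
  finally show ?thesis .
qed

lemma nn_integral_approx_tendsto:
  fixes w c :: "real \<Rightarrow> ennreal"
  assumes [measurable]: "w \<in> borel_measurable borel"
    and shift: "\<And>s d. 0 \<le> s \<Longrightarrow> 1 \<le> d \<Longrightarrow> w (s + d) \<le> w s + c d"
    and fin: "(\<integral>\<^sup>+s. ennreal (f s) * w s \<partial>lborel) < \<infinity>"
    and cost: "((\<lambda>M. c (cutoff M + 1) * ennreal (tail M)) \<longlongrightarrow> 0) at_top"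
  shows "((\<lambda>M. \<integral>\<^sup>+s. ennreal (approx M s) * w s \<partial>lborel) \<longlongrightarrow> (\<integral>\<^sup>+s. ennreal (f s) * w s \<partial>lborel)) at_top"
proof -
  define L where "L = (\<integral>\<^sup>+s. ennreal (f s) * w s \<partial>lborel)"
  have split: "(\<integral>\<^sup>+s. ennreal (approx M s) * w s \<partial>lborel)
      = (\<integral>\<^sup>+s. ennreal (trunc M s) * w s \<partial>lborel) + (\<integral>\<^sup>+s. ennreal (moved M s) * w s \<partial>lborel)" for M
    unfolding approx_def using trunc_nonneg moved_nonneg by (simp add: distrib_right nn_integral_add)
  have "((\<lambda>M. ennreal (tail_ratio M) * L) \<longlongrightarrow> 0 * L) at_top"
    using fin unfolding L_def
    by (intro tendsto_mult_ennreal tendsto_const tendsto_ennrealI[OF tail_ratio_tendsto_0, simplified]) auto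
  from tendsto_add[OF this cost]
  have "((\<lambda>M. ennreal (tail_ratio M) * L + c (cutoff M + 1) * ennreal (tail M)) \<longlongrightarrow> 0) at_top"
    by simp
  from tendsto_sandwich[OF _ _ tendsto_const this]
  have "((\<lambda>M. \<integral>\<^sup>+s. ennreal (moved M s) * w s \<partial>lborel) \<longlongrightarrow> 0) at_top"
    using nn_integral_moved_le[OF assms(1,1) shift] cutoff_ge(3) by (simp add: always_eventually L_def)
  from tendsto_add[OF nn_integral_trunc_tendsto[OF assms(1) fin] this] show ?thesis
    unfolding split by simp
qed

lemma integral_density_approx_tendsto:
  fixes h :: "real \<Rightarrow> real"
  assumes [measurable]: "h \<in> borel_measurable borel" and B: "\<And>x. \<bar>h x\<bar> \<le> B"
  shows "((\<lambda>M. \<integral>x. h x \<partial>density lborel (\<lambda>x. ennreal (approx M x)))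
    \<longlongrightarrow> (\<integral>x. h x \<partial>density lborel (\<lambda>x. ennreal (f x)))) at_top"
proof -
  define w where "w x = ennreal (h x + B)" for x
  have w_le: "w x \<le> ennreal (2 * B)" for x
    using B[of x] by (auto simp: w_def abs_le_iff intro!: ennreal_leI)
  have fin: "(\<integral>\<^sup>+s. ennreal (f s) * w s \<partial>lborel) < \<infinity>"
  proof -
    have "(\<integral>\<^sup>+s. ennreal (f s) * w s \<partial>lborel) \<le> (\<integral>\<^sup>+s. ennreal (f s) * ennreal (2 * B) \<partial>lborel)"
      by (intro nn_integral_mono mult_left_mono w_le) simp
    also have "\<dots> < \<infinity>"
      by (simp add: nn_integral_multc nn_integral_f_mass)
    finally show ?thesis .
  qed
  have "((\<lambda>M. \<integral>\<^sup>+s. ennreal (approx M s) * w s \<partial>lborel) \<longlongrightarrow> (\<integral>\<^sup>+s. ennreal (f s) * w s \<partial>lborel)) at_top"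
  proof (rule nn_integral_approx_tendsto[where c="\<lambda>_. ennreal (2 * B)"])
    show "w (s + d) \<le> w s + ennreal (2 * B)" for s d
      using w_le[of "s + d"] by (simp add: add_increasing)
    show "((\<lambda>M. ennreal (2 * B) * ennreal (tail M)) \<longlongrightarrow> 0) at_top"
      using ennreal_tendsto_cmult[OF _ ennreal_tail_tendsto_0] by simp
  qed (use fin in \<open>simp_all add: w_def\<close>)
  then have "((\<lambda>M. enn2real (\<integral>\<^sup>+s. ennreal (approx M s) * w s \<partial>lborel) - B)
      \<longlongrightarrow> enn2real (\<integral>\<^sup>+s. ennreal (f s) * w s \<partial>lborel) - B) at_top"
    using fin by (intro tendsto_diff tendsto_enn2real) auto
  moreover have "(\<integral>x. h x \<partial>density lborel (\<lambda>x. ennreal (approx M x)))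
      = enn2real (\<integral>\<^sup>+s. ennreal (approx M s) * w s \<partial>lborel) - B" for M
    unfolding w_def
    by (rule integral_density_eq_shifted_nn_integral[OF _ _ approx_nonneg nn_integral_approx_mass B]) simp_all
  moreover have "(\<integral>x. h x \<partial>density lborel (\<lambda>x. ennreal (f x)))
      = enn2real (\<integral>\<^sup>+s. ennreal (f s) * w s \<partial>lborel) - B"
    unfolding w_def
    by (rule integral_density_eq_shifted_nn_integral[OF _ _ f_nonneg nn_integral_f_mass B]) simp_all
  ultimately show ?thesis
    by simp
qed

lemma weak_conv_approx:
  "weak_conv_filter (\<lambda>M. density lborel (\<lambda>x. ennreal (approx M x))) (density lborel (\<lambda>x. ennreal (f x))) at_top"
  unfolding weak_conv_filter_def
proof safe
  fix h :: "real \<Rightarrow> real"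
  assume "continuous_on UNIV h" "bounded (range h)"
  then have "h \<in> borel_measurable borel" and "\<exists>B. \<forall>x. \<bar>h x\<bar> \<le> B"
    by (auto simp: borel_measurable_continuous_onI bounded_iff)
  then show "((\<lambda>M. \<integral>x. h x \<partial>density lborel (\<lambda>x. ennreal (approx M x))) \<longlongrightarrow> (\<integral>x. h x \<partial>density lborel (\<lambda>x. ennreal (f x)))) at_top"
    using integral_density_approx_tendsto by blast
qed

lemma first_moment_cost_tendsto_0:
  assumes fin: "(\<integral>\<^sup>+s. ennreal (f s) * ennreal s \<partial>lborel) < \<infinity>"
  shows "((\<lambda>M. ennreal (cutoff M + 1) * ennreal (tail M)) \<longlongrightarrow> 0) at_top"
proof -
  have le: "ennreal (cutoff M) * ennreal (tail M) \<le> (\<integral>\<^sup>+s. ennreal (f s) * ennreal s * indicator {cutoff M<..} s \<partial>lborel)" for M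
  proof -
    have "ennreal (cutoff M) * ennreal (f s * indicator {cutoff M<..} s)
        \<le> ennreal (f s) * ennreal s * indicator {cutoff M<..} s" for s
    proof (cases "cutoff M < s")
      case True
      then have "cutoff M * f s \<le> f s * s"
        using mult_right_mono[of "cutoff M" s "f s"] f_nonneg[of s] by (simp add: mult.commute)
      then show ?thesis
        using True f_nonneg[of s] cutoff_ge(3)[of M] by (simp add: ennreal_leI flip: ennreal_mult)
    qed simp
    then show ?thesis
      unfolding ennreal_tail by (subst nn_integral_cmult[symmetric]) (auto intro: nn_integral_mono)
  qed
  have "((\<lambda>M. \<integral>\<^sup>+s. ennreal (f s) * ennreal s * indicator {cutoff M<..} s \<partial>lborel) \<longlongrightarrow> 0) at_top"
    using fin filterlim_cutoff by (intro nn_integral_indicator_greaterThan_tendsto_0) auto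
  from tendsto_sandwich[OF _ _ tendsto_const this]
  have "((\<lambda>M. ennreal (cutoff M) * ennreal (tail M)) \<longlongrightarrow> 0) at_top"
    using le by (simp add: always_eventually)
  then have "((\<lambda>M. ennreal (cutoff M) * ennreal (tail M) + ennreal (tail M)) \<longlongrightarrow> 0 + 0) at_top"
    by (intro tendsto_add ennreal_tail_tendsto_0)
  then show ?thesis
    using cutoff_ge(3) by (simp add: ennreal_plus distrib_right)
qed

lemma nn_integral_approx_Kneg_tendsto:
  assumes "0 < \<eta>" "0 < \<theta>"
    and fin: "(\<integral>\<^sup>+s. ennreal (f s) * Kneg_inner \<eta> \<theta> \<beta> \<gamma> \<xi> (exp (- s)) \<partial>lborel) < \<infinity>"
  shows "((\<lambda>M. \<integral>\<^sup>+s. ennreal (approx M s) * Kneg_inner \<eta> \<theta> \<beta> \<gamma> \<xi> (exp (- s)) \<partial>lborel)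
      \<longlongrightarrow> (\<integral>\<^sup>+s. ennreal (f s) * Kneg_inner \<eta> \<theta> \<beta> \<gamma> \<xi> (exp (- s)) \<partial>lborel)) at_top"
proof (rule nn_integral_approx_tendsto[where w="\<lambda>s. Kneg_inner \<eta> \<theta> \<beta> \<gamma> \<xi> (exp (- s))" and c="\<lambda>_. 0"])
  show "Kneg_inner \<eta> \<theta> \<beta> \<gamma> \<xi> (exp (- (s + d))) \<le> Kneg_inner \<eta> \<theta> \<beta> \<gamma> \<xi> (exp (- s)) + 0"
    if "1 \<le> d" for s d
    using Kneg_inner_exp_antimono[OF assms(1,2), of d] that by simp
qed (use fin in \<open>simp_all add: infinity_ennreal_def\<close>)

lemma nn_integral_approx_first_moment_tendsto:
  assumes fin: "(\<integral>\<^sup>+s. ennreal (f s) * ennreal s \<partial>lborel) < \<infinity>"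
  shows "((\<lambda>M. \<integral>\<^sup>+s. ennreal (approx M s) * ennreal s \<partial>lborel) \<longlongrightarrow> (\<integral>\<^sup>+s. ennreal (f s) * ennreal s \<partial>lborel)) at_top"
proof (rule nn_integral_approx_tendsto[where w=ennreal and c=ennreal])
  show "ennreal (s + d) \<le> ennreal s + ennreal d" if "1 \<le> d" for s d :: real
    using that by (intro ennreal_add_le_add) simp
qed (use fin in \<open>simp_all add: first_moment_cost_tendsto_0 infinity_ennreal_def\<close>)
end

section \<open>Convergence of the interaction energy\<close>

locale tail_relocation_kernel = tail_relocation +
  fixes \<eta> \<theta> :: real
  assumes eta_pos: "0 < \<eta>" and theta_pos: "0 < \<theta>"
    and energy_finite: "pair_energy \<eta> \<theta> f f < \<infinity>"
begin

definition "energy_tail M =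
  (\<integral>\<^sup>+p. ennreal (f (fst p)) * ennreal (f (snd p)) * log_kernel \<eta> \<theta> (fst p) (snd p)
        * indicator {cutoff M<..} (snd p) \<partial>(lborel \<Otimes>\<^sub>M lborel))"

definition "trunc_moment M = (\<integral>\<^sup>+t. ennreal (trunc M t) * ennreal t \<partial>lborel)"

lemma energy_tail_tendsto_0: "(energy_tail \<longlongrightarrow> 0) at_top"
  unfolding energy_tail_def using energy_finite filterlim_cutoff
  by (intro nn_integral_indicator_greaterThan_tendsto_0) (simp_all add: pair_energy_product)

lemma pair_energy_trunc_tendsto:
  "((\<lambda>M. pair_energy \<eta> \<theta> (trunc M) (trunc M)) \<longlongrightarrow> pair_energy \<eta> \<theta> f f) at_top"
proof -
  have "pair_energy \<eta> \<theta> (trunc M) (trunc M)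
      = (\<integral>\<^sup>+p. ennreal (f (fst p)) * ennreal (f (snd p)) * log_kernel \<eta> \<theta> (fst p) (snd p)
              * indicator {..cutoff M} (max (fst p) (snd p)) \<partial>(lborel \<Otimes>\<^sub>M lborel))" for M
    unfolding pair_energy_product[OF trunc_measurable trunc_measurable]
    by (intro nn_integral_cong) (auto simp: trunc_def indicator_def)
  then show ?thesis
    using energy_finite filterlim_cutoff
    by (simp add: nn_integral_indicator_atMost_tendsto pair_energy_product)
qed

lemma tail_trunc_moment_le: "ennreal \<theta> * (ennreal (tail M) * trunc_moment M) \<le> energy_tail M"
proof -
  have "ennreal \<theta> * (ennreal (trunc M s) * ennreal s * ennreal (f t * indicator {cutoff M<..} t))
      \<le> ennreal (f s) * ennreal (f t) * log_kernel \<eta> \<theta> s t * indicator {cutoff M<..} t" for s t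
  proof (cases "trunc M s = 0 \<or> t \<le> cutoff M")
    case False
    then have "trunc M s \<noteq> 0" and t: "cutoff M < t"
      by auto
    then have s: "0 \<le> s" "s \<le> cutoff M"
      using trunc_support by blast+
    then have "ennreal \<theta> * (ennreal (trunc M s) * ennreal s * ennreal (f t * indicator {cutoff M<..} t))
        = (ennreal (f s) * ennreal (f t)) * (ennreal \<theta> * ennreal s)"
      using t by (simp add: trunc_def mult_ac)
    also have "\<dots> \<le> (ennreal (f s) * ennreal (f t)) * log_kernel \<eta> \<theta> s t"
      using log_kernel_ge_min[OF theta_pos, of s t] s t theta_pos
      by (intro mult_left_mono) (simp_all flip: ennreal_mult)
    finally show ?thesis
      using t by simp
  next
    case True
    then show ?thesis
      by (elim disjE) (simp_all add: indicator_def)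
  qed
  then have le: "(\<integral>\<^sup>+p. ennreal \<theta> * (ennreal (trunc M (fst p)) * ennreal (fst p)
        * ennreal (f (snd p) * indicator {cutoff M<..} (snd p))) \<partial>(lborel \<Otimes>\<^sub>M lborel)) \<le> energy_tail M"
    unfolding energy_tail_def by (intro nn_integral_mono) simp
  have "ennreal (tail M) * trunc_moment M = trunc_moment M * ennreal (tail M)"
    by (rule mult.commute)
  also have "\<dots> = (\<integral>\<^sup>+p. ennreal (trunc M (fst p)) * ennreal (fst p)
           * ennreal (f (snd p) * indicator {cutoff M<..} (snd p)) \<partial>(lborel \<Otimes>\<^sub>M lborel))"
    unfolding trunc_moment_def ennreal_tail by (rule nn_integral_lborel_pair_mult) simp_all
  finally show ?thesis
    using le by (simp add: nn_integral_cmult)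
qed

lemma cutoff_tail_sq_le:
  "ennreal \<theta> * (ennreal (cutoff M) * (ennreal (tail M) * ennreal (tail M))) \<le> energy_tail M"
proof -
  have "ennreal \<theta> * (ennreal (cutoff M) * (ennreal (f s * indicator {cutoff M<..} s)
          * ennreal (f t * indicator {cutoff M<..} t)))
      \<le> ennreal (f s) * ennreal (f t) * log_kernel \<eta> \<theta> s t * indicator {cutoff M<..} t" for s t
  proof (cases "cutoff M < s \<and> cutoff M < t")
    case True
    have "ennreal \<theta> * ennreal (cutoff M) \<le> ennreal (\<theta> * min s t)"
      using True theta_pos cutoff_ge(3)[of M] by (simp add: ennreal_leI flip: ennreal_mult)
    also have "\<dots> \<le> log_kernel \<eta> \<theta> s t"
      by (rule log_kernel_ge_min[OF theta_pos])
    finally have "(ennreal (f s) * ennreal (f t)) * (ennreal \<theta> * ennreal (cutoff M))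
        \<le> (ennreal (f s) * ennreal (f t)) * log_kernel \<eta> \<theta> s t"
      by (rule mult_left_mono) simp
    then show ?thesis
      using True by (simp add: mult_ac)
  next
    case False
    then show ?thesis
      by (auto simp: indicator_def not_less)
  qed
  then have le: "(\<integral>\<^sup>+p. ennreal \<theta> * (ennreal (cutoff M) * (ennreal (f (fst p) * indicator {cutoff M<..} (fst p))
        * ennreal (f (snd p) * indicator {cutoff M<..} (snd p)))) \<partial>(lborel \<Otimes>\<^sub>M lborel)) \<le> energy_tail M"
    unfolding energy_tail_def by (intro nn_integral_mono) simp
  have "ennreal (tail M) * ennreal (tail M)
      = (\<integral>\<^sup>+p. ennreal (f (fst p) * indicator {cutoff M<..} (fst p))
           * ennreal (f (snd p) * indicator {cutoff M<..} (snd p)) \<partial>(lborel \<Otimes>\<^sub>M lborel))"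
    unfolding ennreal_tail by (rule nn_integral_lborel_pair_mult) simp_all
  then show ?thesis
    using le by (simp add: nn_integral_cmult)
qed

lemma pair_energy_trunc_moved_le:
  "pair_energy \<eta> \<theta> (trunc M) (moved M)
     \<le> ennreal (tail M) * (ennreal (\<theta> + \<eta>) * trunc_moment M + ennreal (separation_const \<eta> \<theta>))"
proof -
  define C where "C = separation_const \<eta> \<theta>"
  have C: "0 \<le> C"
    using separation_const_nonneg[OF eta_pos theta_pos] by (simp add: C_def)
  have inner: "ennreal (trunc M s) * (\<integral>\<^sup>+t. ennreal (moved M t) * log_kernel \<eta> \<theta> s t \<partial>lborel)
      \<le> ennreal (tail M) * (ennreal (\<theta> + \<eta>) * (ennreal (trunc M s) * ennreal s) + ennreal C * ennreal (trunc M s))" for s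
  proof (cases "trunc M s = 0")
    case False
    then have s: "0 \<le> s" "s \<le> cutoff M"
      using trunc_support by blast+
    have "log_kernel \<eta> \<theta> s (v + (cutoff M + 1)) \<le> 0 + ennreal ((\<theta> + \<eta>) * s + C)" if "0 \<le> v" for v
      unfolding C_def using s that eta_pos theta_pos by (simp add: log_kernel_le_separated)
    then have "(\<integral>\<^sup>+t. ennreal (moved M t) * log_kernel \<eta> \<theta> s t \<partial>lborel)
        \<le> ennreal (tail M) * ennreal ((\<theta> + \<eta>) * s + C)"
      using nn_integral_moved_le[of "log_kernel \<eta> \<theta> s" "\<lambda>_. 0" M "ennreal ((\<theta> + \<eta>) * s + C)"]
      by (simp only: mult.commute) simp
    also have "ennreal ((\<theta> + \<eta>) * s + C) = ennreal (\<theta> + \<eta>) * ennreal s + ennreal C"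
      using s C eta_pos theta_pos by (simp add: ennreal_mult ennreal_plus)
    finally have "ennreal (trunc M s) * (\<integral>\<^sup>+t. ennreal (moved M t) * log_kernel \<eta> \<theta> s t \<partial>lborel)
        \<le> ennreal (trunc M s) * (ennreal (tail M) * (ennreal (\<theta> + \<eta>) * ennreal s + ennreal C))"
      by (rule mult_left_mono) simp
    then show ?thesis
      by (simp add: algebra_simps)
  qed simp
  have "pair_energy \<eta> \<theta> (trunc M) (moved M)
      \<le> (\<integral>\<^sup>+s. ennreal (tail M) * (ennreal (\<theta> + \<eta>) * (ennreal (trunc M s) * ennreal s)
           + ennreal C * ennreal (trunc M s)) \<partial>lborel)"
    unfolding pair_energy_def by (rule nn_integral_mono) (rule inner)
  also have "\<dots> = ennreal (tail M) * (ennreal (\<theta> + \<eta>) * trunc_moment M + ennreal C * (\<integral>\<^sup>+s. ennreal (trunc M s) \<partial>lborel))"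
    by (simp add: nn_integral_add nn_integral_cmult trunc_moment_def)
  also have "\<dots> \<le> ennreal (tail M) * (ennreal (\<theta> + \<eta>) * trunc_moment M + ennreal C)"
    using nn_integral_trunc_le_1[of M] by (intro mult_left_mono add_left_mono) (simp_all add: mult_left_le)
  finally show ?thesis
    by (simp add: C_def)
qed

lemma pair_energy_moved_le:
  "pair_energy \<eta> \<theta> (moved M) (moved M)
     \<le> ennreal (tail_ratio M) * (ennreal (tail_ratio M) * pair_energy \<eta> \<theta> f f)
       + ennreal ((\<theta> + \<eta>) * (cutoff M + 1)) * (ennreal (tail M) * ennreal (tail M))"
proof -
  define cost where "cost = ennreal ((\<theta> + \<eta>) * (cutoff M + 1))"
  define J where "J u = (\<integral>\<^sup>+v. ennreal (f v) * log_kernel \<eta> \<theta> u v \<partial>lborel)" for u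
  define W where "W s = (\<integral>\<^sup>+t. ennreal (moved M t) * log_kernel \<eta> \<theta> s t \<partial>lborel)" for s
  have "W \<in> borel_measurable lborel" "J \<in> borel_measurable lborel"
    unfolding W_def J_def by measurable
  then have [measurable]: "W \<in> borel_measurable borel" "J \<in> borel_measurable borel"
    by simp_all
  have shift: "log_kernel \<eta> \<theta> (u + (cutoff M + 1)) (v + (cutoff M + 1)) \<le> log_kernel \<eta> \<theta> u v + cost" for u v
    unfolding cost_def using cutoff_ge(3)[of M] eta_pos theta_pos by (intro log_kernel_shift_le) auto
  have "W (u + (cutoff M + 1)) \<le> ennreal (tail_ratio M) * J u + cost * ennreal (tail M)" for u
    unfolding W_def J_def by (rule nn_integral_moved_le) (simp_all add: shift)
  then have "pair_energy \<eta> \<theta> (moved M) (moved M)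
      \<le> ennreal (tail_ratio M) * (\<integral>\<^sup>+s. ennreal (f s) * (ennreal (tail_ratio M) * J s) \<partial>lborel)
        + (cost * ennreal (tail M)) * ennreal (tail M)"
    unfolding pair_energy_def W_def[symmetric] by (intro nn_integral_moved_le) simp_all
  also have "(\<integral>\<^sup>+s. ennreal (f s) * (ennreal (tail_ratio M) * J s) \<partial>lborel)
      = ennreal (tail_ratio M) * pair_energy \<eta> \<theta> f f"
  proof -
    have "(\<integral>\<^sup>+s. ennreal (f s) * (ennreal (tail_ratio M) * J s) \<partial>lborel)
        = (\<integral>\<^sup>+s. ennreal (tail_ratio M) * (ennreal (f s) * J s) \<partial>lborel)"
      by (simp add: mult.left_commute)
    also have "\<dots> = ennreal (tail_ratio M) * (\<integral>\<^sup>+s. ennreal (f s) * J s \<partial>lborel)"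
      by (rule nn_integral_cmult) simp
    finally show ?thesis
      unfolding pair_energy_def J_def .
  qed
  finally show ?thesis
    by (simp add: cost_def mult.assoc)
qed

lemma tail_trunc_moment_tendsto_0: "((\<lambda>M. ennreal (tail M) * trunc_moment M) \<longlongrightarrow> 0) at_top"
  using theta_pos tail_trunc_moment_le energy_tail_tendsto_0 by (rule tendsto_0_if_cmult_le)

lemma cutoff_tail_sq_tendsto_0:
  "((\<lambda>M. ennreal (cutoff M) * (ennreal (tail M) * ennreal (tail M))) \<longlongrightarrow> 0) at_top"
  using theta_pos cutoff_tail_sq_le energy_tail_tendsto_0 by (rule tendsto_0_if_cmult_le)

lemma pair_energy_trunc_moved_tendsto_0:
  "((\<lambda>M. pair_energy \<eta> \<theta> (trunc M) (moved M)) \<longlongrightarrow> 0) at_top"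
proof -
  have lim: "((\<lambda>M. ennreal (\<theta> + \<eta>) * (ennreal (tail M) * trunc_moment M)
      + ennreal (separation_const \<eta> \<theta>) * ennreal (tail M)) \<longlongrightarrow> 0) at_top"
    using tendsto_add[OF ennreal_tendsto_cmult[OF _ tail_trunc_moment_tendsto_0]
        ennreal_tendsto_cmult[OF _ ennreal_tail_tendsto_0]] by simp
  have le: "pair_energy \<eta> \<theta> (trunc M) (moved M)
      \<le> ennreal (\<theta> + \<eta>) * (ennreal (tail M) * trunc_moment M) + ennreal (separation_const \<eta> \<theta>) * ennreal (tail M)" for M
    using pair_energy_trunc_moved_le[of M] by (simp add: distrib_left mult_ac)
  from tendsto_sandwich[OF _ _ tendsto_const lim] show ?thesis
    using le by (simp add: always_eventually)
qed

lemma pair_energy_moved_tendsto_0: "((\<lambda>M. pair_energy \<eta> \<theta> (moved M) (moved M)) \<longlongrightarrow> 0) at_top"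
proof -
  have ratio: "((\<lambda>M. ennreal (tail_ratio M)) \<longlongrightarrow> 0) at_top"
    using tendsto_ennrealI[OF tail_ratio_tendsto_0] by simp
  have "((\<lambda>M. ennreal (tail_ratio M) * (ennreal (tail_ratio M) * pair_energy \<eta> \<theta> f f)) \<longlongrightarrow> 0 * (0 * pair_energy \<eta> \<theta> f f)) at_top"
    using energy_finite by (intro tendsto_mult_ennreal ratio tendsto_const) auto
  moreover have "((\<lambda>M. ennreal (\<theta> + \<eta>) * (ennreal (cutoff M) * (ennreal (tail M) * ennreal (tail M))
      + ennreal (tail M) * ennreal (tail M))) \<longlongrightarrow> ennreal (\<theta> + \<eta>) * (0 + 0 * 0)) at_top"
    by (intro tendsto_intros cutoff_tail_sq_tendsto_0 ennreal_tail_tendsto_0 tendsto_mult_ennreal) auto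
  moreover have "ennreal ((\<theta> + \<eta>) * (cutoff M + 1))
      = ennreal (\<theta> + \<eta>) * (ennreal (cutoff M) + 1)" for M
    using eta_pos theta_pos cutoff_ge(3)[of M] by (simp add: ennreal_mult ennreal_plus)
  ultimately have "((\<lambda>M. ennreal (tail_ratio M) * (ennreal (tail_ratio M) * pair_energy \<eta> \<theta> f f)
      + ennreal ((\<theta> + \<eta>) * (cutoff M + 1)) * (ennreal (tail M) * ennreal (tail M))) \<longlongrightarrow> 0) at_top"
    using tendsto_add by (fastforce simp: distrib_left distrib_right mult_ac)
  from tendsto_sandwich[OF _ _ tendsto_const this] show ?thesis
    using pair_energy_moved_le by (simp add: always_eventually)
qed

lemma pair_energy_approx_tendsto:
  "((\<lambda>M. pair_energy \<eta> \<theta> (approx M) (approx M)) \<longlongrightarrow> pair_energy \<eta> \<theta> f f) at_top"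
proof -
  have split: "pair_energy \<eta> \<theta> (approx M) (approx M)
      = pair_energy \<eta> \<theta> (trunc M) (trunc M)
        + (pair_energy \<eta> \<theta> (trunc M) (moved M) + pair_energy \<eta> \<theta> (trunc M) (moved M)
           + pair_energy \<eta> \<theta> (moved M) (moved M))" for M
  proof -
    have "approx M = (\<lambda>x. trunc M x + moved M x)"
      by (simp add: approx_def fun_eq_iff)
    then have "pair_energy \<eta> \<theta> (approx M) (approx M)
        = pair_energy \<eta> \<theta> (trunc M) (approx M) + pair_energy \<eta> \<theta> (moved M) (approx M)"
      using trunc_nonneg moved_nonneg by (simp add: pair_energy_add_left)
    also have "pair_energy \<eta> \<theta> (trunc M) (approx M)
        = pair_energy \<eta> \<theta> (trunc M) (trunc M) + pair_energy \<eta> \<theta> (trunc M) (moved M)"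
      using trunc_nonneg moved_nonneg by (simp add: approx_def[abs_def] pair_energy_add_right)
    also have "pair_energy \<eta> \<theta> (moved M) (approx M)
        = pair_energy \<eta> \<theta> (trunc M) (moved M) + pair_energy \<eta> \<theta> (moved M) (moved M)"
      using trunc_nonneg moved_nonneg
      by (simp add: approx_def[abs_def] pair_energy_add_right pair_energy_commute[of "moved M" "trunc M"])
    finally show ?thesis
      by (simp add: add.assoc)
  qed
  have "((\<lambda>M. pair_energy \<eta> \<theta> (trunc M) (moved M) + pair_energy \<eta> \<theta> (trunc M) (moved M)
      + pair_energy \<eta> \<theta> (moved M) (moved M)) \<longlongrightarrow> 0 + 0 + 0) at_top"
    by (intro tendsto_add pair_energy_trunc_moved_tendsto_0 pair_energy_moved_tendsto_0)
  from tendsto_add[OF pair_energy_trunc_tendsto this] show ?thesis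
    unfolding split by simp
qed

end

section \<open>Convergence of the rate function\<close>

context tail_relocation
begin

lemma Itilde_approx_tendsto:
  assumes "0 < \<eta>" "0 < \<theta>"
    and fin: "Itilde \<eta> \<theta> \<beta> \<gamma> \<xi> (density lborel (\<lambda>x. ennreal (f x))) < \<infinity>"
  shows "((\<lambda>M. Itilde \<eta> \<theta> \<beta> \<gamma> \<xi> (density lborel (\<lambda>x. ennreal (approx M x))))
          \<longlongrightarrow> Itilde \<eta> \<theta> \<beta> \<gamma> \<xi> (density lborel (\<lambda>x. ennreal (f x)))) at_top"
proof -
  have fin: "ennreal ((kappa \<gamma> \<xi>)\<^sup>2 / 2) * pair_energy \<eta> \<theta> f f < \<infinity>"
    "ennreal (kappa \<gamma> \<xi>) * (\<integral>\<^sup>+s. ennreal (f s) * Kneg_inner \<eta> \<theta> \<beta> \<gamma> \<xi> (exp (- s)) \<partial>lborel) < \<infinity>"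
    "Mneg_coeff \<eta> \<theta> \<gamma> \<xi> * (\<integral>\<^sup>+s. ennreal (f s) * ennreal s \<partial>lborel) < \<infinity>"
    using fin unfolding Itilde_density[OF f_measurable] ennreal_add_less_top by simp_all
  have H: "((\<lambda>M. ennreal ((kappa \<gamma> \<xi>)\<^sup>2 / 2) * pair_energy \<eta> \<theta> (approx M) (approx M))
      \<longlongrightarrow> ennreal ((kappa \<gamma> \<xi>)\<^sup>2 / 2) * pair_energy \<eta> \<theta> f f) at_top"
  proof (rule ennreal_tendsto_cmult_if_finite[OF fin(1)])
    assume "pair_energy \<eta> \<theta> f f < \<infinity>"
    then interpret tail_relocation_kernel f K \<eta> \<theta>
      using assms by unfold_locales
    show "((\<lambda>M. pair_energy \<eta> \<theta> (approx M) (approx M)) \<longlongrightarrow> pair_energy \<eta> \<theta> f f) at_top"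
      by (rule pair_energy_approx_tendsto)
  qed simp
  have K: "((\<lambda>M. ennreal (kappa \<gamma> \<xi>) * (\<integral>\<^sup>+s. ennreal (approx M s) * Kneg_inner \<eta> \<theta> \<beta> \<gamma> \<xi> (exp (- s)) \<partial>lborel))
      \<longlongrightarrow> ennreal (kappa \<gamma> \<xi>) * (\<integral>\<^sup>+s. ennreal (f s) * Kneg_inner \<eta> \<theta> \<beta> \<gamma> \<xi> (exp (- s)) \<partial>lborel)) at_top"
    by (rule ennreal_tendsto_cmult_if_finite[OF fin(2)])
      (simp_all add: nn_integral_approx_Kneg_tendsto assms(1,2))
  have M: "((\<lambda>M. Mneg_coeff \<eta> \<theta> \<gamma> \<xi> * (\<integral>\<^sup>+s. ennreal (approx M s) * ennreal s \<partial>lborel))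
      \<longlongrightarrow> Mneg_coeff \<eta> \<theta> \<gamma> \<xi> * (\<integral>\<^sup>+s. ennreal (f s) * ennreal s \<partial>lborel)) at_top"
    by (rule ennreal_tendsto_cmult_if_finite[OF fin(3)])
      (simp_all add: nn_integral_approx_first_moment_tendsto Mneg_coeff_def)
  show ?thesis
    unfolding Itilde_density[OF f_measurable] Itilde_density[OF approx_measurable]
    by (intro tendsto_add H K M)
qed

end

theorem mainTheorem6:
  fixes \<eta> \<theta> \<beta> \<gamma> \<xi> :: real and lam :: "real measure"
  assumes "\<eta> > 0" and "\<theta> > 0" and "0 < \<gamma>" and "\<gamma> < 1" and "\<beta> > 0"
    and "- (\<gamma>\<^sup>2) < \<xi>" and "\<xi> \<le> 1"
    and "lam \<in> Qset \<beta> \<gamma> \<xi>"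
    and "Itilde \<eta> \<theta> \<beta> \<gamma> \<xi> lam < \<infinity>"
  shows "\<exists>lams :: real \<Rightarrow> real measure.
           (\<forall>M > 0. lams M \<in> Qset \<beta> \<gamma> \<xi> \<and> compactly_supported (lams M)) \<and>
           weak_conv_filter lams lam at_top \<and>
           ((\<lambda>M. Itilde \<eta> \<theta> \<beta> \<gamma> \<xi> (lams M)) \<longlongrightarrow> Itilde \<eta> \<theta> \<beta> \<gamma> \<xi> lam) at_top"
proof -
  have "0 \<le> kappa \<gamma> \<xi>" "0 \<le> \<gamma>\<^sup>2 - kappa \<gamma> \<xi>"
    using assms(3,4,6,7) by (auto simp: kappa_def)
  then have kappa: "0 \<le> \<beta> * kappa \<gamma> \<xi>" "0 \<le> \<beta> * (\<gamma>\<^sup>2 - kappa \<gamma> \<xi>)"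
    using assms(5) by simp_all
  obtain f where [measurable]: "f \<in> borel_measurable borel" and f_nonneg: "\<And>x. 0 \<le> f x"
    and f_below: "\<And>x. x < \<beta> * (\<gamma>\<^sup>2 - kappa \<gamma> \<xi>) \<Longrightarrow> f x = 0"
    and f_bound: "\<And>x. \<beta> * kappa \<gamma> \<xi> * f x \<le> 1" and "(\<integral>\<^sup>+x. ennreal (f x) \<partial>lborel) = 1"
    and lam: "lam = density lborel (\<lambda>x. ennreal (f x))"
    using Qset_obtain_density[OF assms(8)] by metis
  then have f_integrable: "integrable lborel f" and f_integral: "(\<integral>x. f x \<partial>lborel) = 1"
    using nn_integral_eq_integrable[of f lborel 1] by auto
  then obtain K where "0 \<le> K" "1/2 \<le> (\<integral>x. f x * indicator {..K} x \<partial>lborel)"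
    by (rule exists_half_mass_radius)
  then interpret tail_relocation f K
    using f_nonneg f_integrable f_integral f_below kappa(2) by unfold_locales auto
  have "((\<lambda>M. Itilde \<eta> \<theta> \<beta> \<gamma> \<xi> (density lborel (\<lambda>x. ennreal (approx M x))))
      \<longlongrightarrow> Itilde \<eta> \<theta> \<beta> \<gamma> \<xi> lam) at_top"
    using Itilde_approx_tendsto[OF assms(1,2)] assms(9) unfolding lam .
  then show ?thesis
    using density_approx_in_Qset[OF f_below f_bound kappa(1)] compactly_supported_approx weak_conv_approx
    unfolding lam by (intro exI[of _ "\<lambda>M. density lborel (\<lambda>x. ennreal (approx M x))"]) simp
qed

end
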